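(* Let $\mathcal{M}\subseteq\mathbb{R}^d$ be a compact embedded $C^2$-submanifold without boundary with reach $\tau_{\mathcal{M}}>0$. If $x\in\mathcal{T}(\tau_{\mathcal{M}})$, then $$\|P_0(\pi(x))-P_0(x)\|\le\kappa^{\mathcal{M}}_{\pi(x)}(x-\pi(x))\Big(1-\frac{\|\pi(x)-x\|}{\rho(\pi(x),x-\pi(x))}\Big)^{-1}\|x-\pi(x)\|\le\frac{\|x-\pi(x)\|\kappa_{\mathcal{M}}}{1-\|x-\pi(x)\|\kappa_{\mathcal{M}}}\le\frac{\|x-\pi(x)\|/\tau_{\mathcal{M}}}{1-\|x-\pi(x)\|/\tau_{\mathcal{M}}}.$$
   Context: Reach $\tau_{\mathcal{M}}$: largest $\tau\ge0$ such that $(p,v)\mapsto p+v$ on $\{(p,v):p\in\mathcal{M},v\in N_p\mathcal{M},\|v\|<\tau\}$ is a diffeomorphism onto its image; $\mathcal{T}(\tau)=\{p+v:p\in\mathcal{M},v\in N_p\mathcal{M},\|v\|<\tau\}$. $\pi(x)$ is the unique closest point of $\mathcal{M}$ to $x$, and $P_0(x)=\pi'(x)$ is its Jacobian (so $P_0(p)$ is the orthogonal projection onto $T_p\mathcal{M}$ for $p\in\mathcal{M}$). $\mathrm{II}_p:T_p\mathcal{M}\times T_p\mathcal{M}\to N_p\mathcal{M}$ is the second fundamental form; for $u\in N_p\mathcal{M}$ the Weingarten map $S_p^u:T_p\mathcal{M}\to T_p\mathcal{M}$ is the self-adjoint operator with $\langle w,S_p^u v\rangle=\langle\mathrm{II}_p(v,w),u\rangle$.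 For nonzero $u\in N_p\mathcal{M}$: $\frac{1}{\rho(p,u)}=\max\big(\operatorname{eig}(S_p^{u/\|u\|})\cup\{0\}\big)$, $\kappa_p^{\mathcal{M}}(u)=\max|\operatorname{eig}(S_p^{u/\|u\|})|$, and $\kappa_{\mathcal{M}}=\max_{(p,u)}\kappa_p^{\mathcal{M}}(u)$ over the normal bundle. It holds that $\kappa_{\mathcal{M}}\le1/\tau_{\mathcal{M}}$. *)

theory Defs
  imports "HOL-Analysis.Analysis"
begin

definition orth_compl :: "'a::euclidean_space set \<Rightarrow> 'a set" where
  "orth_compl T = {u. \<forall>v\<in>T. inner u v = 0}"

definition graph_chart ::
  "'a::euclidean_space set \<Rightarrow> 'a \<Rightarrow> 'a set \<Rightarrow> real \<Rightarrow> ('a \<Rightarrow> 'a) \<Rightarrow> bool" where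
  "graph_chart M p T r g \<longleftrightarrow> subspace T \<and> 0 < r \<and> g 0 = 0 \<and>
     (\<forall>v\<in>T \<inter> ball 0 r. g v \<in> orth_compl T) \<and>
     (\<exists>(Dg :: 'a \<Rightarrow> 'a \<Rightarrow>\<^sub>L 'a) (D2g :: 'a \<Rightarrow> 'a \<Rightarrow>\<^sub>L ('a \<Rightarrow>\<^sub>L 'a)).
        (\<forall>y\<in>ball 0 r. (g has_derivative blinfun_apply (Dg y)) (at y) \<and>
                        (Dg has_derivative blinfun_apply (D2g y)) (at y)) \<and>
        continuous_on (ball 0 r) D2g \<and> Dg 0 = 0) \<and>
     (\<exists>W. open W \<and> p \<in> W \<and> M \<inter> W = (\<lambda>v. p + v + g v) ` (T \<inter> ball 0 r))"

definition C2_submanifold :: "'a::euclidean_space set \<Rightarrow> bool" where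
  "C2_submanifold M \<longleftrightarrow> (\<forall>p\<in>M. \<exists>T r g. graph_chart M p T r g)"

definition tangent_space :: "'a::euclidean_space set \<Rightarrow> 'a \<Rightarrow> 'a set" where
  "tangent_space M p = (SOME T. \<exists>r g. graph_chart M p T r g)"

definition normal_space :: "'a::euclidean_space set \<Rightarrow> 'a \<Rightarrow> 'a set" where
  "normal_space M p = orth_compl (tangent_space M p)"

text \<open>Second fundamental form II_p(v,w) = D^2 g(0)(v,w) for a graph chart at p.\<close>
definition sff :: "'a::euclidean_space set \<Rightarrow> 'a \<Rightarrow> 'a \<Rightarrow> 'a \<Rightarrow> 'a" where
  "sff M p v w =
     (let g = (SOME g. \<exists>r. graph_chart M p (tangent_space M p) r g)
      in frechet_derivative (\<lambda>y. frechet_derivative g (at y) w) (at 0) v)"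

definition weingarten :: "'a::euclidean_space set \<Rightarrow> 'a \<Rightarrow> 'a \<Rightarrow> 'a \<Rightarrow> 'a" where
  "weingarten M p u v = (SOME s. s \<in> tangent_space M p \<and>
      (\<forall>w\<in>tangent_space M p. inner w s = inner (sff M p v w) u))"

definition weingarten_eigs :: "'a::euclidean_space set \<Rightarrow> 'a \<Rightarrow> 'a \<Rightarrow> real set" where
  "weingarten_eigs M p u = {c. \<exists>v\<in>tangent_space M p. v \<noteq> 0 \<and> weingarten M p u v = c *\<^sub>R v}"

text \<open>inv_rho M p u = 1 / rho(p,u) = max (eig(S_p^{u/|u|}) \<union> {0}).\<close>
definition inv_rho :: "'a::euclidean_space set \<Rightarrow> 'a \<Rightarrow> 'a \<Rightarrow> real" where
  "inv_rho M p u = Max (weingarten_eigs M p (u /\<^sub>R norm u) \<union> {0})"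

definition kappa_at :: "'a::euclidean_space set \<Rightarrow> 'a \<Rightarrow> 'a \<Rightarrow> real" where
  "kappa_at M p u = Max (abs ` weingarten_eigs M p (u /\<^sub>R norm u) \<union> {0})"

definition kappa :: "'a::euclidean_space set \<Rightarrow> real" where
  "kappa M = Sup {kappa_at M p u | p u. p \<in> M \<and> u \<in> normal_space M p \<and> u \<noteq> 0}"

definition normal_bundle_lt :: "'a::euclidean_space set \<Rightarrow> real \<Rightarrow> ('a \<times> 'a) set" where
  "normal_bundle_lt M \<tau> = {(p, v). p \<in> M \<and> v \<in> normal_space M p \<and> norm v < \<tau>}"

definition tube :: "'a::euclidean_space set \<Rightarrow> real \<Rightarrow> 'a set" where
  "tube M \<tau> = {p + v | p v. p \<in> M \<and> v \<in> normal_space M p \<and> norm v < \<tau>}"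

definition normal_diffeo :: "'a::euclidean_space set \<Rightarrow> real \<Rightarrow> bool" where
  "normal_diffeo M \<tau> \<longleftrightarrow>
     inj_on (\<lambda>(p, v). p + v) (normal_bundle_lt M \<tau>) \<and> open (tube M \<tau>) \<and>
     (\<exists>(G :: 'a \<Rightarrow> 'a \<times> 'a) (G' :: 'a \<Rightarrow> 'a \<Rightarrow>\<^sub>L ('a \<times> 'a)).
        (\<forall>(p, v)\<in>normal_bundle_lt M \<tau>. G (p + v) = (p, v)) \<and>
        (\<forall>x\<in>tube M \<tau>. (G has_derivative blinfun_apply (G' x)) (at x)) \<and>
        continuous_on (tube M \<tau>) G')"

definition reach :: "'a::euclidean_space set \<Rightarrow> real" where
  "reach M = Sup {\<tau>. \<tau> \<ge> 0 \<and> normal_diffeo M \<tau>}"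

definition proj :: "'a::euclidean_space set \<Rightarrow> 'a \<Rightarrow> 'a" where
  "proj M x = (THE p. p \<in> M \<and> (\<forall>q\<in>M. dist x p \<le> dist x q))"

definition P0 :: "'a::euclidean_space set \<Rightarrow> 'a \<Rightarrow> 'a \<Rightarrow>\<^sub>L 'a" where
  "P0 M x = (THE L. (proj M has_derivative blinfun_apply L) (at x))"

end

(* Write x = p + v with p = proj M x and v normal at p, and let S be the Weingarten map in
   the direction u = v/|v|.  Differentiating the first-order condition
   <y - proj M y, tangent vector at proj M y> = 0 of the nearest-point problem in a graph chart
   at p shows that D = P0 M x maps into T_p M and satisfies (I - |v| S) D = P0 M p, the
   orthogonal projection onto T_p M.  Hence P0 M p - P0 M x = -|v| S D, and expanding in an
   orthonormal eigenbasis of the self-adjoint S bounds every eigencomponent by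
   kappa_p(u) |v| / (1 - |v|/rho(p,u)).  The same identity at distance 1/l along u shows that no
   eigenvalue l of S exceeds 1/reach M, since I - S/l would annihilate its eigenvector; this
   gives kappa_M <= 1/reach M and the remaining inequalities by monotonicity of t/(1 - t). *)

theory Submission
  imports Defs
begin

section \<open>Symmetry of second derivatives\<close>

lemma second_difference_estimate:
  fixes g :: "'a::real_normed_vector \<Rightarrow> 'b::real_normed_vector"
    and Dg :: "'a \<Rightarrow> 'a \<Rightarrow>\<^sub>L 'b" and D2 :: "'a \<Rightarrow>\<^sub>L ('a \<Rightarrow>\<^sub>L 'b)"
  assumes dg: "\<And>y. norm y < r \<Longrightarrow> (g has_derivative blinfun_apply (Dg y)) (at y)"
    and remainder: "\<And>y. norm y < r \<Longrightarrow> norm (Dg y - Dg 0 - D2 y) \<le> \<eta> * norm y"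
    and "0 \<le> \<eta>" and vw: "2 * norm v + norm w < r"
  shows "norm (g (v + w) - g v - g w + g 0 - D2 w v) \<le> \<eta> * (2 * norm v + norm w) * norm v"
proof -
  define S where "S = closed_segment 0 v"
  define \<psi> where "\<psi> \<xi> = g (\<xi> + w) - g \<xi> - D2 w \<xi>" for \<xi>
  define R where "R y = Dg y - Dg 0 - D2 y" for y
  have small: "norm (\<xi> + w) + norm \<xi> \<le> 2 * norm v + norm w" if "\<xi> \<in> S" for \<xi>
    using that segment_bound(1)[of \<xi> 0 v] norm_triangle_ineq[of \<xi> w] by (auto simp: S_def)
  then have inside: "norm (\<xi> + w) < r" "norm \<xi> < r" if "\<xi> \<in> S" for \<xi>
    using that vw norm_ge_zero[of \<xi>] norm_ge_zero[of "\<xi> + w"] by (smt (verit))+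
  have der: "(\<psi> has_derivative blinfun_apply (R (\<xi> + w) - R \<xi>)) (at \<xi> within S)"
    if "\<xi> \<in> S" for \<xi>
  proof -
    have "(\<psi> has_derivative (\<lambda>k. Dg (\<xi> + w) k - Dg \<xi> k - D2 w k)) (at \<xi>)"
      unfolding \<psi>_def using inside[OF that]
      by (auto intro!: derivative_eq_intros dg[THEN has_derivative_compose[rotated]]
          bounded_linear.has_derivative[OF blinfun.bounded_linear_right])
    moreover have "blinfun_apply (R (\<xi> + w) - R \<xi>) = (\<lambda>k. Dg (\<xi> + w) k - Dg \<xi> k - D2 w k)"
      by (auto simp: R_def blinfun.bilinear_simps)
    ultimately show ?thesis by (simp add: has_derivative_at_withinI)
  qed
  have bound: "onorm (blinfun_apply (R (\<xi> + w) - R \<xi>)) \<le> \<eta> * (2 * norm v + norm w)"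
    if "\<xi> \<in> S" for \<xi>
  proof -
    have "norm (R (\<xi> + w) - R \<xi>) \<le> \<eta> * norm (\<xi> + w) + \<eta> * norm \<xi>"
      using inside[OF that] remainder norm_triangle_ineq4 unfolding R_def by (smt (verit))
    also have "\<dots> \<le> \<eta> * (2 * norm v + norm w)"
      using small[OF that] \<open>0 \<le> \<eta>\<close> by (simp add: distrib_left[symmetric] mult_left_mono)
    finally show ?thesis by (simp add: norm_blinfun.rep_eq)
  qed
  have "norm (\<psi> v - \<psi> 0) \<le> \<eta> * (2 * norm v + norm w) * norm (v - 0)"
    by (rule differentiable_bound[OF convex_closed_segment[of 0 v, folded S_def] der bound])
      (auto simp: S_def)
  moreover have "\<psi> v - \<psi> 0 = g (v + w) - g v - g w + g 0 - D2 w v"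
    by (simp add: \<psi>_def blinfun.zero_right)
  ultimately show ?thesis by simp
qed

lemma second_difference_approx:
  fixes g :: "'a::real_normed_vector \<Rightarrow> 'b::real_normed_vector"
    and Dg :: "'a \<Rightarrow> 'a \<Rightarrow>\<^sub>L 'b" and D2 :: "'a \<Rightarrow>\<^sub>L ('a \<Rightarrow>\<^sub>L 'b)"
  assumes "r > 0"
    and dg: "\<And>y. norm y < r \<Longrightarrow> (g has_derivative blinfun_apply (Dg y)) (at y)"
    and d2: "(Dg has_derivative blinfun_apply D2) (at 0)" and "e > 0"
  shows "\<exists>d>0. \<forall>s. 0 < s \<and> s < d \<longrightarrow>
    norm (g (s *\<^sub>R v + s *\<^sub>R w) - g (s *\<^sub>R v) - g (s *\<^sub>R w) + g 0 - (s * s) *\<^sub>R D2 w v)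
      \<le> e * (s * s)"
proof -
  define n where "n = 2 * norm v + norm w + 1"
  have n: "n > 0" "2 * norm v + norm w < n" "norm v < n"
    unfolding n_def using norm_ge_zero[of v] norm_ge_zero[of w] by linarith+
  define \<eta> where "\<eta> = e / (n * n)"
  have "\<eta> > 0" using \<open>e > 0\<close> n by (simp add: \<eta>_def)
  then obtain d0 where "d0 > 0"
    and remainder: "\<And>y. norm y < d0 \<Longrightarrow> norm (Dg y - Dg 0 - D2 y) \<le> \<eta> * norm y"
    using d2[unfolded has_derivative_at_alt] by (metis diff_zero)
  define d where "d = min r d0 / n"
  have "norm (g (s *\<^sub>R v + s *\<^sub>R w) - g (s *\<^sub>R v) - g (s *\<^sub>R w) + g 0 - (s * s) *\<^sub>R D2 w v)
      \<le> e * (s * s)" if s: "0 < s" "s < d" for s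
  proof -
    have sn: "s * n < min r d0" using s n by (simp add: d_def pos_less_divide_eq)
    have sv: "s * (2 * norm v + norm w) < s * n" using s n by simp
    then have small: "2 * norm (s *\<^sub>R v) + norm (s *\<^sub>R w) < min r d0"
      using s sn by (simp add: algebra_simps)
    have "norm (g (s *\<^sub>R v + s *\<^sub>R w) - g (s *\<^sub>R v) - g (s *\<^sub>R w) + g 0 - D2 (s *\<^sub>R w) (s *\<^sub>R v))
        \<le> \<eta> * (2 * norm (s *\<^sub>R v) + norm (s *\<^sub>R w)) * norm (s *\<^sub>R v)"
      by (rule second_difference_estimate[where r = "min r d0" and Dg = Dg])
        (use small dg remainder \<open>\<eta> > 0\<close> in auto)
    also have "\<dots> \<le> \<eta> * (s * n) * (s * n)"
      using s n sv \<open>\<eta> > 0\<close> by (intro mult_mono) (auto simp: algebra_simps)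
    also have "\<dots> = e * (s * s)" using n by (simp add: \<eta>_def)
    finally show ?thesis by (simp add: blinfun.scaleR_left blinfun.scaleR_right)
  qed
  moreover have "d > 0" using \<open>d0 > 0\<close> \<open>r > 0\<close> n by (simp add: d_def)
  ultimately show ?thesis by blast
qed

lemma second_derivative_symmetric:
  fixes g :: "'a::real_normed_vector \<Rightarrow> 'b::real_normed_vector"
    and Dg :: "'a \<Rightarrow> 'a \<Rightarrow>\<^sub>L 'b" and D2 :: "'a \<Rightarrow>\<^sub>L ('a \<Rightarrow>\<^sub>L 'b)"
  assumes "r > 0"
    and dg: "\<And>y. norm y < r \<Longrightarrow> (g has_derivative blinfun_apply (Dg y)) (at y)"
    and d2: "(Dg has_derivative blinfun_apply D2) (at 0)"
  shows "D2 v w = D2 w v"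
proof -
  define \<Delta> where "\<Delta> s = g (s *\<^sub>R v + s *\<^sub>R w) - g (s *\<^sub>R v) - g (s *\<^sub>R w) + g 0" for s
  have "norm (D2 w v - D2 v w) \<le> e" if "e > 0" for e
  proof -
    obtain \<delta> where "\<delta> > 0"
      and wv: "\<And>s. 0 < s \<and> s < \<delta> \<Longrightarrow> norm (\<Delta> s - (s * s) *\<^sub>R D2 w v) \<le> e/2 * (s * s)"
      using second_difference_approx[OF \<open>r > 0\<close> dg d2, of "e/2" v w] \<open>e > 0\<close>
      unfolding \<Delta>_def by auto
    obtain \<delta>' where "\<delta>' > 0"
      and vw: "\<And>s. 0 < s \<and> s < \<delta>' \<Longrightarrow> norm (\<Delta> s - (s * s) *\<^sub>R D2 v w) \<le> e/2 * (s * s)"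
      using second_difference_approx[OF \<open>r > 0\<close> dg d2, of "e/2" w v] \<open>e > 0\<close>
      unfolding \<Delta>_def by (auto simp: algebra_simps)
    define s where "s = min \<delta> \<delta>' / 2"
    have s: "0 < s" "s < \<delta>" "s < \<delta>'" using \<open>\<delta> > 0\<close> \<open>\<delta>' > 0\<close> by (auto simp: s_def)
    have "(s * s) * norm (D2 w v - D2 v w)
        = norm ((\<Delta> s - (s * s) *\<^sub>R D2 v w) - (\<Delta> s - (s * s) *\<^sub>R D2 w v))"
      by (simp add: scaleR_diff_right[symmetric])
    also have "\<dots> \<le> e/2 * (s * s) + e/2 * (s * s)"
      using wv[of s] vw[of s] s norm_triangle_ineq4 by (smt (verit))
    finally show ?thesis using s by simp
  qed
  then show ?thesis using field_le_epsilon[of "norm (D2 w v - D2 v w)" 0] by simp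
qed

section \<open>Orthogonal projection onto a subspace\<close>

definition orth_proj :: "'a::euclidean_space set \<Rightarrow> 'a \<Rightarrow> 'a" where
  "orth_proj T z = (SOME y. y \<in> T \<and> (\<forall>w\<in>T. inner (z - y) w = 0))"

lemma orth_proj_exists:
  fixes T :: "'a::euclidean_space set"
  assumes "subspace T"
  shows "\<exists>y. y \<in> T \<and> (\<forall>w\<in>T. inner (z - y) w = 0)"
proof -
  obtain y z' where "y \<in> span T" "\<And>w. w \<in> span T \<Longrightarrow> orthogonal z' w" "z = y + z'"
    using orthogonal_subspace_decomp_exists[of T z] by blast
  then show ?thesis
    using assms by (auto simp: orthogonal_def span_eq_iff[THEN iffD2, OF assms])
qed

lemma
  fixes T :: "'a::euclidean_space set"
  assumes "subspace T"
  shows orth_proj_in: "orth_proj T z \<in> T"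
    and inner_orth_proj_residual: "w \<in> T \<Longrightarrow> inner (z - orth_proj T z) w = 0"
  using someI_ex[OF orth_proj_exists[OF assms, of z]] unfolding orth_proj_def by auto

lemma orthogonal_to_own_set_eq_0:
  assumes "y \<in> T" "\<And>w. w \<in> T \<Longrightarrow> inner y w = 0"
  shows "y = 0"
  using assms(2)[OF assms(1)] by simp

lemma orth_proj_unique:
  fixes T :: "'a::euclidean_space set"
  assumes T: "subspace T" and y: "y \<in> T" "\<And>w. w \<in> T \<Longrightarrow> inner (z - y) w = 0"
  shows "orth_proj T z = y"
proof -
  have "orth_proj T z - y = 0"
  proof (rule orthogonal_to_own_set_eq_0)
    show "orth_proj T z - y \<in> T" using orth_proj_in[OF T] y T by (simp add: subspace_diff)
    show "inner (orth_proj T z - y) w = 0" if "w \<in> T" for w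
      using y(2)[OF that] inner_orth_proj_residual[OF T that, of z] by (simp add: inner_diff_left)
  qed
  then show ?thesis by simp
qed

lemma orth_proj_id:
  fixes T :: "'a::euclidean_space set"
  assumes "subspace T" "z \<in> T"
  shows "orth_proj T z = z"
  using orth_proj_unique[OF assms(1) assms(2)] by simp

lemma orth_proj_orth_compl:
  fixes T :: "'a::euclidean_space set"
  assumes "subspace T" "z \<in> orth_compl T"
  shows "orth_proj T z = 0"
  using assms by (intro orth_proj_unique) (auto simp: orth_compl_def subspace_0)

lemma inner_orth_proj:
  fixes T :: "'a::euclidean_space set"
  assumes "subspace T" "w \<in> T"
  shows "inner (orth_proj T z) w = inner z w"
  using inner_orth_proj_residual[OF assms] by (simp add: inner_diff_left)

lemma linear_orth_proj:
  fixes T :: "'a::euclidean_space set"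
  assumes T: "subspace T"
  shows "linear (orth_proj T)"
proof
  show "orth_proj T (x + y) = orth_proj T x + orth_proj T y" for x y
    by (rule orth_proj_unique[OF T])
      (auto simp: orth_proj_in[OF T] subspace_add T inner_diff_left inner_add_left inner_orth_proj[OF T])
  show "orth_proj T (c *\<^sub>R x) = c *\<^sub>R orth_proj T x" for c x
    by (rule orth_proj_unique[OF T])
      (auto simp: orth_proj_in[OF T] subspace_scale T inner_diff_left inner_orth_proj[OF T])
qed

lemma bounded_linear_orth_proj:
  fixes T :: "'a::euclidean_space set"
  assumes "subspace T"
  shows "bounded_linear (orth_proj T)"
  using linear_orth_proj[OF assms] by (simp add: linear_conv_bounded_linear)

lemma norm_orth_proj_le:
  fixes T :: "'a::euclidean_space set"
  assumes T: "subspace T"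
  shows "norm (orth_proj T z) \<le> norm z"
proof -
  have "orthogonal (orth_proj T z) (z - orth_proj T z)"
    using inner_orth_proj_residual[OF T orth_proj_in[OF T]] by (simp add: orthogonal_def inner_commute)
  then have "(norm z)\<^sup>2 = (norm (orth_proj T z))\<^sup>2 + (norm (z - orth_proj T z))\<^sup>2"
    using norm_add_Pythagorean by fastforce
  then show ?thesis using power2_le_iff_abs_le[of "norm z" "norm (orth_proj T z)"] by simp
qed

section \<open>Spectral theorem for self-adjoint maps of a subspace\<close>

lemma quadratic_nonneg_imp_linear_coeff_0:
  fixes c q :: real
  assumes nonneg: "\<And>s. 0 \<le> 2 * s * c + s\<^sup>2 * q"
  shows "c = 0"
proof -
  define k where "k = \<bar>q\<bar> + 1"
  have k: "k > 0" "q \<le> k" by (auto simp: k_def)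
  have "0 \<le> k\<^sup>2 * (2 * (- c / k) * c + (- c / k)\<^sup>2 * q)"
    using nonneg[of "- c / k"] by simp
  also have "\<dots> = c\<^sup>2 * (q - 2 * k)"
    using k by (simp add: power2_eq_square field_simps)
  finally have "c\<^sup>2 \<le> 0" using k by (auto simp: zero_le_mult_iff)
  then show "c = 0" by simp
qed

definition orthonormal_eigenbasis :: "'a::euclidean_space set \<Rightarrow> ('a \<Rightarrow> 'a) \<Rightarrow> 'a set \<Rightarrow> bool" where
  "orthonormal_eigenbasis T S B \<longleftrightarrow> B \<subseteq> T \<and> finite B \<and> (\<forall>b\<in>B. norm b = 1) \<and>
     pairwise orthogonal B \<and> (\<forall>b\<in>B. S b = inner b (S b) *\<^sub>R b) \<and>
     (\<forall>a\<in>T. a = (\<Sum>b\<in>B. inner a b *\<^sub>R b))"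

lemma
  assumes "orthonormal_eigenbasis T S B"
  shows orthonormal_eigenbasis_expansion: "a \<in> T \<Longrightarrow> a = (\<Sum>b\<in>B. inner a b *\<^sub>R b)"
    and orthonormal_eigenbasis_eigenvector: "b \<in> B \<Longrightarrow> S b = inner b (S b) *\<^sub>R b"
    and orthonormal_eigenbasis_subset: "B \<subseteq> T"
    and orthonormal_eigenbasis_norm: "b \<in> B \<Longrightarrow> norm b = 1"
    and orthonormal_eigenbasis_finite: "finite B"
  using assms by (auto simp: orthonormal_eigenbasis_def)

lemma rayleigh_quotient_max_exists:
  fixes S :: "'a::euclidean_space \<Rightarrow> 'a"
  assumes T: "subspace T" "T \<noteq> {0}" and "linear S"
  obtains e where "e \<in> T" "norm e = 1" "\<And>a. a \<in> T \<Longrightarrow> inner a (S a) \<le> inner e (S e) * (norm a)\<^sup>2"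
proof -
  define K where "K = T \<inter> sphere 0 1"
  obtain a0 where a0: "a0 \<in> T" "a0 \<noteq> 0" using T subspace_0 by blast
  have "compact K" unfolding K_def
    by (intro closed_Int_compact closed_subspace T compact_sphere)
  moreover have "a0 /\<^sub>R norm a0 \<in> K" using a0 T by (auto simp: K_def subspace_scale)
  moreover have "continuous_on K (\<lambda>a. inner a (S a))"
    using \<open>linear S\<close> by (intro continuous_intros linear_continuous_on) (auto simp: linear_conv_bounded_linear)
  ultimately obtain e where e: "e \<in> K" and emax: "\<And>a. a \<in> K \<Longrightarrow> inner a (S a) \<le> inner e (S e)"
    using continuous_attains_sup[of K "\<lambda>a. inner a (S a)"] by blast
  have "inner a (S a) \<le> inner e (S e) * (norm a)\<^sup>2" if a: "a \<in> T" for a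
  proof (cases "a = 0")
    case True
    then show ?thesis using \<open>linear S\<close> by (simp add: linear_0)
  next
    case False
    then have "a /\<^sub>R norm a \<in> K" using a T by (auto simp: K_def subspace_scale)
    moreover have "inner (a /\<^sub>R norm a) (S (a /\<^sub>R norm a)) = inner a (S a) / (norm a)\<^sup>2"
      using \<open>linear S\<close> by (simp add: linear_scale power2_eq_square divide_inverse)
    ultimately have "inner a (S a) / (norm a)\<^sup>2 \<le> inner e (S e)" using emax by metis
    then show ?thesis using False by (simp add: pos_divide_le_eq mult.commute)
  qed
  with e show ?thesis by (intro that) (auto simp: K_def)
qed

lemma rayleigh_max_eigenvector:
  fixes S :: "'a::euclidean_space \<Rightarrow> 'a"
  assumes T: "subspace T" and "linear S" and ST: "\<And>a. a \<in> T \<Longrightarrow> S a \<in> T"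
    and selfadj: "\<And>a b. a \<in> T \<Longrightarrow> b \<in> T \<Longrightarrow> inner b (S a) = inner a (S b)"
    and e: "e \<in> T" "norm e = 1"
    and max: "\<And>a. a \<in> T \<Longrightarrow> inner a (S a) \<le> inner e (S e) * (norm a)\<^sup>2"
  shows "S e = inner e (S e) *\<^sub>R e"
proof -
  define l where "l = inner e (S e)"
  have "inner (S e - l *\<^sub>R e) w = 0" if w: "w \<in> T" for w
  proof -
    have "0 \<le> 2 * s * (l * inner e w - inner w (S e)) + s\<^sup>2 * (l * (norm w)\<^sup>2 - inner w (S w))" for s
    proof -
      have "e + s *\<^sub>R w \<in> T" using e w T by (simp add: subspace_add subspace_scale)
      then have "0 \<le> l * (norm (e + s *\<^sub>R w))\<^sup>2 - inner (e + s *\<^sub>R w) (S (e + s *\<^sub>R w))"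
        using max by (simp add: l_def)
      also have "\<dots> = 2 * s * (l * inner e w - inner w (S e)) + s\<^sup>2 * (l * (norm w)\<^sup>2 - inner w (S w))"
      proof -
        have "(norm (e + s *\<^sub>R w))\<^sup>2 = inner e e + 2 * s * inner e w + s\<^sup>2 * inner w w"
          unfolding power2_norm_eq_inner
          by (simp add: inner_add_left inner_add_right inner_commute[of w e] power2_eq_square algebra_simps)
        then have "(norm (e + s *\<^sub>R w))\<^sup>2 = 1 + 2 * s * inner e w + s\<^sup>2 * (norm w)\<^sup>2"
          using e(2) by (simp add: power2_norm_eq_inner[symmetric])
        moreover have "inner (e + s *\<^sub>R w) (S (e + s *\<^sub>R w))
            = l + 2 * s * inner w (S e) + s\<^sup>2 * inner w (S w)"
          using \<open>linear S\<close> selfadj[OF w e(1)]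
          by (simp add: linear_add linear_scale inner_add_left inner_add_right l_def
              power2_eq_square algebra_simps)
        ultimately show ?thesis by (simp add: algebra_simps)
      qed
      finally show ?thesis .
    qed
    then have "l * inner e w - inner w (S e) = 0" by (rule quadratic_nonneg_imp_linear_coeff_0)
    then show ?thesis by (simp add: inner_diff_left inner_commute[of "S e" w])
  qed
  moreover have "S e - l *\<^sub>R e \<in> T" using ST e T by (simp add: subspace_diff subspace_scale)
  ultimately show ?thesis
    using orthogonal_to_own_set_eq_0[of "S e - l *\<^sub>R e" T] by (simp add: l_def)
qed

lemma orthonormal_eigenbasis_insert:
  fixes S :: "'a::euclidean_space \<Rightarrow> 'a"
  assumes T: "subspace T" and e: "e \<in> T" "norm e = 1" "S e = inner e (S e) *\<^sub>R e"
    and B: "orthonormal_eigenbasis {a \<in> T. inner a e = 0} S B"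
  shows "orthonormal_eigenbasis T S (insert e B)"
  unfolding orthonormal_eigenbasis_def
proof (intro conjI ballI)
  have ee: "inner e e = 1" using e(2) by (simp add: power2_norm_eq_inner[symmetric])
  have orth: "inner b e = 0" if "b \<in> B" for b
    using orthonormal_eigenbasis_subset[OF B] that by auto
  show "insert e B \<subseteq> T" "finite (insert e B)" "pairwise orthogonal (insert e B)"
    using B e orth
    by (auto simp: orthonormal_eigenbasis_def pairwise_insert orthogonal_def inner_commute)
  show "norm b = 1" "S b = inner b (S b) *\<^sub>R b" if "b \<in> insert e B" for b
    using B e that by (auto simp: orthonormal_eigenbasis_def)
  fix a assume "a \<in> T"
  then have "a - inner a e *\<^sub>R e \<in> {a \<in> T. inner a e = 0}"
    using e T ee by (auto simp: subspace_diff subspace_scale inner_diff_left)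
  then have "a - inner a e *\<^sub>R e = (\<Sum>b\<in>B. inner (a - inner a e *\<^sub>R e) b *\<^sub>R b)"
    by (rule orthonormal_eigenbasis_expansion[OF B])
  also have "\<dots> = (\<Sum>b\<in>B. inner a b *\<^sub>R b)"
    by (intro sum.cong refl) (simp add: inner_diff_left orth inner_commute[of e])
  finally have "a = inner a e *\<^sub>R e + (\<Sum>b\<in>B. inner a b *\<^sub>R b)"
    by (simp add: algebra_simps)
  moreover have "e \<notin> B" using orth ee by force
  ultimately show "a = (\<Sum>b\<in>insert e B. inner a b *\<^sub>R b)"
    using orthonormal_eigenbasis_finite[OF B] by simp
qed

lemma self_adjoint_eigenbasis_exists:
  fixes S :: "'a::euclidean_space \<Rightarrow> 'a"
  assumes "subspace T" "linear S" "\<And>a. a \<in> T \<Longrightarrow> S a \<in> T"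
    "\<And>a b. a \<in> T \<Longrightarrow> b \<in> T \<Longrightarrow> inner b (S a) = inner a (S b)"
  shows "\<exists>B. orthonormal_eigenbasis T S B"
  using assms
proof (induction "dim T" arbitrary: T rule: less_induct)
  case less
  note T = less.prems(1) and lin = less.prems(2) and ST = less.prems(3) and selfadj = less.prems(4)
  show ?case
  proof (cases "T = {0}")
    case True
    then show ?thesis by (auto simp: orthonormal_eigenbasis_def intro!: exI[of _ "{}"])
  next
    case False
    then obtain e where e: "e \<in> T" "norm e = 1"
      and max: "\<And>a. a \<in> T \<Longrightarrow> inner a (S a) \<le> inner e (S e) * (norm a)\<^sup>2"
      using rayleigh_quotient_max_exists[OF T _ lin] by blast
    have eig: "S e = inner e (S e) *\<^sub>R e"
      by (rule rayleigh_max_eigenvector[OF T lin ST selfadj e max])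
    define T' where "T' = {a \<in> T. inner a e = 0}"
    have T': "subspace T'" using T unfolding T'_def subspace_def by (auto simp: inner_add_left)
    have "T' \<subseteq> T" "e \<notin> T'" using e(2) by (auto simp: T'_def power2_norm_eq_inner[symmetric])
    then have "dim T' < dim T"
      using T T' e by (intro dim_psubset) (auto simp: span_eq_iff[THEN iffD2])
    moreover have "S a \<in> T'" if "a \<in> T'" for a
    proof -
      have "inner (S a) e = inner a (S e)" using that e selfadj[of a e] by (simp add: T'_def inner_commute)
      also have "\<dots> = 0" using that by (subst eig) (simp add: T'_def)
      finally show ?thesis using that ST by (simp add: T'_def)
    qed
    ultimately obtain B where "orthonormal_eigenbasis T' S B"
      using less.hyps[OF _ T' lin] selfadj by (auto simp: T'_def)
    then show ?thesis unfolding T'_def using orthonormal_eigenbasis_insert[of T e S, OF T e eig] by blast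
  qed
qed

lemma orthonormal_eigenbasis_apply:
  assumes B: "orthonormal_eigenbasis T S B" and "linear S" and "a \<in> T"
  shows "S a = (\<Sum>b\<in>B. (inner a b * inner b (S b)) *\<^sub>R b)"
proof -
  have "S a = S (\<Sum>b\<in>B. inner a b *\<^sub>R b)"
    using orthonormal_eigenbasis_expansion[OF B \<open>a \<in> T\<close>] by simp
  also have "\<dots> = (\<Sum>b\<in>B. inner a b *\<^sub>R S b)"
    by (simp add: linear_sum[OF \<open>linear S\<close>] linear_scale[OF \<open>linear S\<close>])
  also have "\<dots> = (\<Sum>b\<in>B. (inner a b * inner b (S b)) *\<^sub>R b)"
    by (intro sum.cong refl) (metis orthonormal_eigenbasis_eigenvector[OF B] scaleR_scaleR)
  finally show ?thesis .
qed

lemma orthonormal_eigenbasis_norm_sum: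
  assumes B: "orthonormal_eigenbasis T S B"
  shows "(norm (\<Sum>b\<in>B. x b *\<^sub>R b))\<^sup>2 = (\<Sum>b\<in>B. (x b)\<^sup>2)"
proof -
  have "pairwise (\<lambda>i j. orthogonal (x i *\<^sub>R i) (x j *\<^sub>R j)) B"
    using B by (auto simp: orthonormal_eigenbasis_def pairwise_def orthogonal_clauses)
  then have "(norm (\<Sum>b\<in>B. x b *\<^sub>R b))\<^sup>2 = (\<Sum>b\<in>B. (norm (x b *\<^sub>R b))\<^sup>2)"
    using B by (intro norm_sum_Pythagorean) (auto simp: orthonormal_eigenbasis_def)
  also have "\<dots> = (\<Sum>b\<in>B. (x b)\<^sup>2)"
    using B by (intro sum.cong refl) (auto simp: orthonormal_eigenbasis_def power2_eq_square)
  finally show ?thesis .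
qed

lemma orthonormal_eigenbasis_eigenvalue:
  assumes B: "orthonormal_eigenbasis T S B"
    and selfadj: "\<And>a b. a \<in> T \<Longrightarrow> b \<in> T \<Longrightarrow> inner b (S a) = inner a (S b)"
    and a: "a \<in> T" "a \<noteq> 0" "S a = \<mu> *\<^sub>R a"
  shows "\<exists>b\<in>B. inner b (S b) = \<mu>"
proof -
  have "\<exists>b\<in>B. inner a b \<noteq> 0"
  proof (rule ccontr)
    assume "\<not> (\<exists>b\<in>B. inner a b \<noteq> 0)"
    then have "(\<Sum>b\<in>B. inner a b *\<^sub>R b) = 0" by simp
    then show False using orthonormal_eigenbasis_expansion[OF B a(1)] a(2) by simp
  qed
  then obtain b where b: "b \<in> B" "inner a b \<noteq> 0" by blast
  have "\<mu> * inner a b = inner b (S a)" using a by (simp add: inner_commute)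
  also have "\<dots> = inner a (S b)"
    using selfadj a(1) b(1) orthonormal_eigenbasis_subset[OF B] by blast
  also have "\<dots> = inner b (S b) * inner a b"
    by (subst orthonormal_eigenbasis_eigenvector[OF B b(1)]) simp
  finally show ?thesis using b by auto
qed

lemma orthonormal_eigenbasis_resolvent_bound:
  assumes B: "orthonormal_eigenbasis T S B" and "linear S" and "a \<in> T" and "C \<ge> 0"
    and bound: "\<And>b. b \<in> B \<Longrightarrow> \<bar>t * inner b (S b)\<bar> \<le> C * \<bar>1 - t * inner b (S b)\<bar>"
  shows "norm (t *\<^sub>R S a) \<le> C * norm (a - t *\<^sub>R S a)"
proof -
  define l where "l b = inner b (S b)" for b
  have tS: "t *\<^sub>R S a = (\<Sum>b\<in>B. (t * inner a b * l b) *\<^sub>R b)"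
    using orthonormal_eigenbasis_apply[OF B \<open>linear S\<close> \<open>a \<in> T\<close>]
    by (simp add: l_def scaleR_sum_right mult.assoc)
  have residual: "a - t *\<^sub>R S a = (\<Sum>b\<in>B. (inner a b * (1 - t * l b)) *\<^sub>R b)"
    by (subst (1) orthonormal_eigenbasis_expansion[OF B \<open>a \<in> T\<close>])
      (simp add: tS sum_subtractf[symmetric] algebra_simps)
  have "(norm (t *\<^sub>R S a))\<^sup>2 = (\<Sum>b\<in>B. (t * inner a b * l b)\<^sup>2)"
    unfolding tS by (rule orthonormal_eigenbasis_norm_sum[OF B])
  also have "\<dots> \<le> (\<Sum>b\<in>B. (C * (inner a b * (1 - t * l b)))\<^sup>2)"
  proof (intro sum_mono)
    fix b assume "b \<in> B"
    have "\<bar>t * inner a b * l b\<bar> = \<bar>inner a b\<bar> * \<bar>t * l b\<bar>" by (simp add: abs_mult)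
    also have "\<dots> \<le> \<bar>inner a b\<bar> * (C * \<bar>1 - t * l b\<bar>)"
      using bound[OF \<open>b \<in> B\<close>] by (intro mult_left_mono) (auto simp: l_def)
    also have "\<dots> = \<bar>C * (inner a b * (1 - t * l b))\<bar>" using \<open>C \<ge> 0\<close> by (simp add: abs_mult)
    finally show "(t * inner a b * l b)\<^sup>2 \<le> (C * (inner a b * (1 - t * l b)))\<^sup>2"
      by (simp add: abs_le_square_iff)
  qed
  also have "\<dots> = (C * norm (a - t *\<^sub>R S a))\<^sup>2"
    unfolding residual orthonormal_eigenbasis_norm_sum[OF B] power_mult_distrib
    by (simp add: sum_distrib_left power_mult_distrib)
  finally show ?thesis using \<open>C \<ge> 0\<close> by (simp add: power2_le_iff_abs_le)
qed

section \<open>Graph charts and the nearest-point map\<close>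

lemma graph_chartE:
  assumes "graph_chart M p T r g"
  obtains Dg D2g W where "subspace T" "r > 0" "g 0 = 0"
    "\<And>v. v \<in> T \<Longrightarrow> v \<in> ball 0 r \<Longrightarrow> g v \<in> orth_compl T"
    "\<And>y. y \<in> ball 0 r \<Longrightarrow> (g has_derivative blinfun_apply (Dg y)) (at y)"
    "\<And>y. y \<in> ball 0 r \<Longrightarrow> (Dg has_derivative blinfun_apply (D2g y)) (at y)"
    "Dg 0 = 0" "open W" "p \<in> W" "M \<inter> W = (\<lambda>v. p + v + g v) ` (T \<inter> ball 0 r)"
proof -
  from assms obtain Dg D2g W where "subspace T" "r > 0" "g 0 = 0"
    "\<forall>v\<in>T \<inter> ball 0 r. g v \<in> orth_compl T"
    "\<forall>y\<in>ball 0 r. (g has_derivative blinfun_apply (Dg y)) (at y) \<and>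
       (Dg has_derivative blinfun_apply (D2g y)) (at y)"
    "Dg 0 = 0" "open W" "p \<in> W" "M \<inter> W = (\<lambda>v. p + v + g v) ` (T \<inter> ball 0 r)"
    unfolding graph_chart_def by blast
  then show ?thesis by (intro that[of Dg D2g W]) auto
qed

lemma graph_chart_in_manifold:
  assumes "graph_chart M p T r g" "v \<in> T" "v \<in> ball 0 r"
  shows "p + v + g v \<in> M"
  using assms by (elim graph_chartE) blast

lemma tangent_graph_chart_exists:
  assumes "C2_submanifold M" "p \<in> M"
  shows "\<exists>r. graph_chart M p (tangent_space M p) r (SOME g. \<exists>r. graph_chart M p (tangent_space M p) r g)"
proof -
  from assms have "\<exists>T r g. graph_chart M p T r g" by (auto simp: C2_submanifold_def)
  then have "\<exists>r g. graph_chart M p (tangent_space M p) r g"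
    unfolding tangent_space_def by (rule someI_ex[of "\<lambda>T. \<exists>r g. graph_chart M p T r g"])
  then have "\<exists>g r. graph_chart M p (tangent_space M p) r g" by blast
  then show ?thesis by (rule someI_ex[of "\<lambda>g. \<exists>r. graph_chart M p (tangent_space M p) r g"])
qed

lemma tangent_chartE:
  assumes "C2_submanifold M" "p \<in> M"
  obtains r g Dg D2g W where "graph_chart M p (tangent_space M p) r g"
    "subspace (tangent_space M p)" "r > 0" "g 0 = 0"
    "\<And>v. v \<in> tangent_space M p \<Longrightarrow> v \<in> ball 0 r \<Longrightarrow> g v \<in> orth_compl (tangent_space M p)"
    "\<And>y. y \<in> ball 0 r \<Longrightarrow> (g has_derivative blinfun_apply (Dg y)) (at y)"
    "\<And>y. y \<in> ball 0 r \<Longrightarrow> (Dg has_derivative blinfun_apply (D2g y)) (at y)"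
    "Dg 0 = 0" "open W" "p \<in> W" "M \<inter> W = (\<lambda>v. p + v + g v) ` (tangent_space M p \<inter> ball 0 r)"
    "\<And>a w. sff M p a w = D2g 0 a w"
    "\<And>a w. D2g 0 a w = D2g 0 w a"
proof -
  let ?T = "tangent_space M p"
  define g where "g = (SOME g. \<exists>r. graph_chart M p ?T r g)"
  obtain r where chart: "graph_chart M p ?T r g"
    using tangent_graph_chart_exists[OF assms] unfolding g_def by blast
  obtain Dg D2g W where facts: "subspace ?T" "r > 0" "g 0 = 0"
    "\<And>v. v \<in> ?T \<Longrightarrow> v \<in> ball 0 r \<Longrightarrow> g v \<in> orth_compl ?T"
    and dg: "\<And>y. y \<in> ball 0 r \<Longrightarrow> (g has_derivative blinfun_apply (Dg y)) (at y)"
    and d2g: "\<And>y. y \<in> ball 0 r \<Longrightarrow> (Dg has_derivative blinfun_apply (D2g y)) (at y)"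
    and more: "Dg 0 = 0" "open W" "p \<in> W" "M \<inter> W = (\<lambda>v. p + v + g v) ` (?T \<inter> ball 0 r)"
    by (rule graph_chartE[OF chart], rule that)
  have center: "0 \<in> ball 0 r" using \<open>r > 0\<close> by simp
  have sff_eq: "sff M p a w = D2g 0 a w" for a w
  proof -
    have "((\<lambda>y. Dg y w) has_derivative (\<lambda>a. D2g 0 a w)) (at 0)"
      by (rule bounded_linear.has_derivative[OF blinfun.bounded_linear_left d2g[OF center]])
    then have "((\<lambda>y. frechet_derivative g (at y) w) has_derivative (\<lambda>a. D2g 0 a w)) (at 0)"
      by (rule has_derivative_transform_within_open[OF _ open_ball center])
        (simp add: frechet_derivative_at[OF dg, symmetric])
    then show ?thesis
      by (simp add: sff_def Let_def g_def[symmetric] frechet_derivative_at[symmetric])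
  qed
  have symmetric: "D2g 0 a w = D2g 0 w a" for a w
    by (rule second_derivative_symmetric[of r g Dg]) (use facts dg d2g[OF center] in auto)
  show ?thesis by (rule that[OF chart facts dg d2g more sff_eq symmetric])
qed

lemma subspace_tangent_space:
  assumes "C2_submanifold M" "p \<in> M"
  shows "subspace (tangent_space M p)"
  using assms by (elim tangent_chartE)

lemma sff_bilinear_symmetric:
  assumes "C2_submanifold M" "p \<in> M"
  obtains L :: "'a::euclidean_space \<Rightarrow>\<^sub>L 'a \<Rightarrow>\<^sub>L 'a"
  where "\<And>a w. sff M p a w = L a w" "\<And>a w. L a w = L w a"
  by (rule tangent_chartE[OF assms], rule that)

text \<open>The squared distance from \<open>y\<close> along the chart curve \<open>s \<mapsto> v0 + s w\<close> is minimal
  at \<open>s = 0\<close>, so its derivative there vanishes.\<close>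
lemma nearest_point_chart_orthogonal:
  fixes g :: "'a::euclidean_space \<Rightarrow> 'a"
  assumes T: "subspace T" and in_M: "\<And>v. v \<in> T \<Longrightarrow> v \<in> ball 0 r \<Longrightarrow> p + v + g v \<in> M"
    and v0: "v0 \<in> T" "v0 \<in> ball 0 r" and dg: "(g has_derivative G') (at v0)"
    and nearest: "\<And>q. q \<in> M \<Longrightarrow> dist y (p + v0 + g v0) \<le> dist y q"
    and w: "w \<in> T"
  shows "inner (y - (p + v0 + g v0)) (w + G' w) = 0"
proof -
  define c where "c s = y - (p + (v0 + s *\<^sub>R w) + g (v0 + s *\<^sub>R w))" for s :: real
  define \<phi> where "\<phi> s = inner (c s) (c s)" for s
  have "linear G'" using dg by (rule has_derivative_linear)
  have line: "((\<lambda>s::real. v0 + s *\<^sub>R w) has_derivative (\<lambda>s. s *\<^sub>R w)) (at 0)"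
    by (auto intro!: derivative_eq_intros)
  have "((\<lambda>s::real. g (v0 + s *\<^sub>R w)) has_derivative (\<lambda>s. G' (s *\<^sub>R w))) (at 0)"
    using has_derivative_compose[OF line, of g G'] dg by simp
  then have c: "(c has_derivative (\<lambda>s. - (s *\<^sub>R w + G' (s *\<^sub>R w)))) (at 0)"
    unfolding c_def by (auto intro!: derivative_eq_intros)
  have "(\<phi> has_derivative (\<lambda>h. inner (c 0) (- (h *\<^sub>R w + G' (h *\<^sub>R w)))
      + inner (- (h *\<^sub>R w + G' (h *\<^sub>R w))) (c 0))) (at 0)"
    unfolding \<phi>_def by (rule has_derivative_inner[OF c c])
  moreover have "(\<lambda>h. inner (c 0) (- (h *\<^sub>R w + G' (h *\<^sub>R w))) + inner (- (h *\<^sub>R w + G' (h *\<^sub>R w))) (c 0))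
      = (*) (- 2 * inner (c 0) (w + G' w))"
    using \<open>linear G'\<close>
    by (auto simp: linear_scale inner_commute[of _ "c 0"] inner_add_right algebra_simps)
  ultimately have D: "DERIV \<phi> 0 :> - 2 * inner (c 0) (w + G' w)"
    by (simp add: has_field_derivative_def)
  define \<delta> where "\<delta> = (r - norm v0) / (norm w + 1)"
  have "\<delta> > 0" using v0(2) unfolding \<delta>_def by (simp add: add_nonneg_pos)
  have "\<phi> 0 \<le> \<phi> s" if s: "\<bar>0 - s\<bar> < \<delta>" for s
  proof -
    have "norm (s *\<^sub>R w) \<le> \<bar>s\<bar> * (norm w + 1)" by (simp add: mult_left_mono)
    also have "\<dots> < r - norm v0"
      using s by (simp add: \<delta>_def pos_less_divide_eq add_nonneg_pos)
    finally have "norm (v0 + s *\<^sub>R w) < r" using norm_triangle_ineq[of v0 "s *\<^sub>R w"] by linarith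
    then have "p + (v0 + s *\<^sub>R w) + g (v0 + s *\<^sub>R w) \<in> M"
      using in_M[of "v0 + s *\<^sub>R w"] v0 w T by (auto simp: subspace_add subspace_scale)
    from nearest[OF this] have "norm (c 0) \<le> norm (c s)" by (simp add: c_def dist_norm)
    then show ?thesis by (simp add: \<phi>_def power2_norm_eq_inner[symmetric] power_mono)
  qed
  then have "- 2 * inner (c 0) (w + G' w) = 0"
    using DERIV_local_min[OF D \<open>\<delta> > 0\<close>] by blast
  then show ?thesis by (simp add: c_def)
qed

lemma nearest_point_normal:
  assumes M: "C2_submanifold M" and "q \<in> M" and nearest: "\<And>q'. q' \<in> M \<Longrightarrow> dist y q \<le> dist y q'"
  shows "y - q \<in> normal_space M q"
proof -
  obtain r g Dg D2g W where chart: "graph_chart M q (tangent_space M q) r g"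
    and T: "subspace (tangent_space M q)" and "r > 0" "g 0 = 0" "Dg 0 = 0"
    and dg: "\<And>y. y \<in> ball 0 r \<Longrightarrow> (g has_derivative blinfun_apply (Dg y)) (at y)"
    by (rule tangent_chartE[OF M \<open>q \<in> M\<close>], rule that)
  have "inner (y - (q + 0 + g 0)) (w + Dg 0 w) = 0" if "w \<in> tangent_space M q" for w
    by (rule nearest_point_chart_orthogonal[OF T graph_chart_in_manifold[OF chart] _ _ dg])
      (use T \<open>r > 0\<close> that nearest \<open>g 0 = 0\<close> in \<open>auto simp: subspace_0\<close>)
  then show ?thesis using \<open>g 0 = 0\<close> \<open>Dg 0 = 0\<close> by (simp add: normal_space_def orth_compl_def)
qed

text \<open>Injectivity of the normal map forces every nearest point of \<open>p + v\<close> to be \<open>p\<close>.\<close>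
lemma proj_tube_normal:
  assumes M: "C2_submanifold M" and "compact M" and nd: "normal_diffeo M \<tau>"
    and p: "p \<in> M" and v: "v \<in> normal_space M p" "norm v < \<tau>"
  shows "proj M (p + v) = p" and "\<And>q. q \<in> M \<Longrightarrow> dist (p + v) p \<le> dist (p + v) q"
proof -
  let ?y = "p + v"
  have inj: "inj_on (\<lambda>(p, v). p + v) (normal_bundle_lt M \<tau>)"
    using nd unfolding normal_diffeo_def by blast
  have unique: "q = p" if q: "q \<in> M" "\<And>q'. q' \<in> M \<Longrightarrow> dist ?y q \<le> dist ?y q'" for q
  proof -
    have "?y - q \<in> normal_space M q" by (rule nearest_point_normal[OF M q])
    moreover have "norm (?y - q) < \<tau>" using q(2)[OF p] v by (simp add: dist_norm)
    ultimately have "(q, ?y - q) \<in> normal_bundle_lt M \<tau>" "(p, v) \<in> normal_bundle_lt M \<tau>"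
      using q p v by (auto simp: normal_bundle_lt_def)
    moreover have "(\<lambda>(p, v). p + v) (q, ?y - q) = (\<lambda>(p, v). p + v) (p, v)" by simp
    ultimately show "q = p" using inj_onD[OF inj] by blast
  qed
  obtain q where q: "q \<in> M" "\<And>q'. q' \<in> M \<Longrightarrow> dist ?y q \<le> dist ?y q'"
    using distance_attains_inf[of M ?y] compact_imp_closed[OF \<open>compact M\<close>] p by blast
  with unique have "q = p" by blast
  with q show nearest: "\<And>q'. q' \<in> M \<Longrightarrow> dist ?y p \<le> dist ?y q'" by blast
  show "proj M ?y = p" unfolding proj_def
    by (rule the_equality) (use p nearest unique in blast)+
qed

lemma proj_tube:
  assumes "C2_submanifold M" "compact M" "normal_diffeo M \<tau>" and "y \<in> tube M \<tau>"
  shows "proj M y \<in> M" and "\<And>q. q \<in> M \<Longrightarrow> dist y (proj M y) \<le> dist y q"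
  using \<open>y \<in> tube M \<tau>\<close> proj_tube_normal[OF assms(1-3)] by (auto simp: tube_def)

lemma normal_diffeo_0: "normal_diffeo M 0"
proof -
  have "normal_bundle_lt M 0 = {}" "tube M 0 = {}" by (auto simp: normal_bundle_lt_def tube_def)
  then show ?thesis unfolding normal_diffeo_def
    by (intro conjI exI[of _ "\<lambda>x. (0, 0)"] exI[of _ "\<lambda>x. 0"]) auto
qed

lemma normal_diffeo_gt_exists:
  assumes "s < reach M"
  obtains \<tau> where "\<tau> > s" "normal_diffeo M \<tau>"
proof -
  define X where "X = {\<tau>. \<tau> \<ge> 0 \<and> normal_diffeo M \<tau>}"
  have "X \<noteq> {}" using normal_diffeo_0[of M] by (auto simp: X_def)
  then have "\<exists>\<tau>\<in>X. s < \<tau>"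
    using assms less_cSup_iff[of X s] unfolding reach_def X_def[symmetric] bdd_above_def
    by (metis not_le)
  then show ?thesis using that by (auto simp: X_def)
qed

text \<open>On the tube, \<open>proj\<close> is the first component of the \<open>C\<^sup>1\<close> inverse of the normal map.\<close>
lemma proj_differentiable_tube:
  assumes M: "C2_submanifold M" and "compact M" and nd: "normal_diffeo M \<tau>"
    and y: "y \<in> tube M \<tau>"
  obtains D where "(proj M has_derivative D) (at y)"
proof -
  obtain G :: "'a \<Rightarrow> 'a \<times> 'a" and G' where G: "\<forall>(p, v)\<in>normal_bundle_lt M \<tau>. G (p + v) = (p, v)"
    and dG: "\<forall>x\<in>tube M \<tau>. (G has_derivative blinfun_apply (G' x)) (at x)"
    and "open (tube M \<tau>)"
    using nd unfolding normal_diffeo_def by blast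
  have "((\<lambda>z. fst (G z)) has_derivative (\<lambda>h. fst (G' y h))) (at y)"
    using dG y by (auto intro: has_derivative_fst)
  moreover have "fst (G z) = proj M z" if "z \<in> tube M \<tau>" for z
    using that G proj_tube_normal(1)[OF M \<open>compact M\<close> nd]
    by (auto simp: tube_def normal_bundle_lt_def)
  ultimately have "(proj M has_derivative (\<lambda>h. fst (G' y h))) (at y)"
    by (rule has_derivative_transform_within_open[OF _ \<open>open (tube M \<tau>)\<close> y])
  then show ?thesis by (rule that)
qed

lemma continuous_on_proj_tube:
  assumes "C2_submanifold M" "compact M" "normal_diffeo M \<tau>"
  shows "continuous_on (tube M \<tau>) (proj M)"
proof (intro continuous_at_imp_continuous_on ballI)
  fix y assume "y \<in> tube M \<tau>"
  then obtain D where "(proj M has_derivative D) (at y)" by (rule proj_differentiable_tube[OF assms])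
  then show "isCont (proj M) y" by (rule has_derivative_continuous)
qed

lemma P0_eq_derivative:
  assumes "(proj M has_derivative D) (at x)"
  shows "blinfun_apply (P0 M x) = D"
proof -
  have D: "bounded_linear D" using assms by (rule has_derivative_bounded_linear)
  have "P0 M x = Blinfun D" unfolding P0_def
  proof (rule the_equality)
    show "(proj M has_derivative blinfun_apply (Blinfun D)) (at x)"
      using assms D by (simp add: bounded_linear_Blinfun_apply)
    fix L assume "(proj M has_derivative blinfun_apply L) (at x)"
    then have "blinfun_apply L = D" using assms by (rule has_derivative_unique)
    then show "L = Blinfun D" using D by (metis blinfun_apply_inverse)
  qed
  then show ?thesis using D by (simp add: bounded_linear_Blinfun_apply)
qed

section \<open>The Weingarten map\<close>

lemma weingarten_exists:
  fixes M :: "'a::euclidean_space set"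
  assumes "C2_submanifold M" "p \<in> M"
  shows "\<exists>s. s \<in> tangent_space M p \<and> (\<forall>w\<in>tangent_space M p. inner w s = inner (sff M p a w) u)"
proof -
  let ?T = "tangent_space M p"
  have T: "subspace ?T" by (rule subspace_tangent_space[OF assms])
  obtain L :: "'a \<Rightarrow>\<^sub>L 'a \<Rightarrow>\<^sub>L 'a" where L: "\<And>a w. sff M p a w = L a w"
    by (rule sff_bilinear_symmetric[OF assms], rule that)
  define f where "f x = inner (L a (orth_proj ?T x)) u" for x
  have "linear (\<lambda>x. inner (L a x) u)"
    by (intro bounded_linear.linear bounded_linear_compose[OF bounded_linear_inner_left]
        bounded_linear_blinfun_apply bounded_linear_ident)
  then have "linear f"
    unfolding f_def using linear_compose[OF linear_orth_proj[OF T]] by (simp add: o_def)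
  \<comment> \<open>\<open>z\<close> represents the linear functional \<open>f\<close>; its projection onto \<open>T\<close> is the Weingarten vector.\<close>
  define z where "z = (\<Sum>b\<in>Basis. f b *\<^sub>R b)"
  have "inner w (orth_proj ?T z) = inner (sff M p a w) u" if w: "w \<in> ?T" for w
  proof -
    have "inner w (orth_proj ?T z) = inner z w"
      using inner_orth_proj[OF T w] by (simp add: inner_commute)
    also have "\<dots> = (\<Sum>b\<in>Basis. f b * inner b w)" by (simp add: z_def inner_sum_left)
    also have "\<dots> = f (\<Sum>b\<in>Basis. inner w b *\<^sub>R b)"
      by (simp add: linear_sum[OF \<open>linear f\<close>] linear_scale[OF \<open>linear f\<close>] inner_commute mult.commute)
    also have "\<dots> = inner (sff M p a w) u" by (simp add: euclidean_representation f_def orth_proj_id[OF T w] L)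
    finally show ?thesis .
  qed
  then show ?thesis using orth_proj_in[OF T] by blast
qed

lemma
  assumes "C2_submanifold M" "p \<in> M"
  shows weingarten_in_tangent_space: "weingarten M p u a \<in> tangent_space M p"
    and inner_weingarten: "w \<in> tangent_space M p \<Longrightarrow> inner w (weingarten M p u a) = inner (sff M p a w) u"
  using someI_ex[OF weingarten_exists[OF assms, of a u]] unfolding weingarten_def by blast+

lemma weingarten_unique:
  assumes M: "C2_submanifold M" "p \<in> M"
    and y: "y \<in> tangent_space M p" "\<And>w. w \<in> tangent_space M p \<Longrightarrow> inner w y = inner (sff M p a w) u"
  shows "weingarten M p u a = y"
proof -
  have "weingarten M p u a - y = 0"
  proof (rule orthogonal_to_own_set_eq_0)
    show "weingarten M p u a - y \<in> tangent_space M p"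
      using weingarten_in_tangent_space[OF M] y(1) subspace_tangent_space[OF M] by (simp add: subspace_diff)
    show "inner (weingarten M p u a - y) w = 0" if "w \<in> tangent_space M p" for w
      using inner_weingarten[OF M that] y(2)[OF that] by (simp add: inner_commute[of _ w] inner_diff_right)
  qed
  then show ?thesis by simp
qed

lemma linear_weingarten:
  fixes M :: "'a::euclidean_space set"
  assumes M: "C2_submanifold M" "p \<in> M"
  shows "linear (weingarten M p u)"
proof -
  have T: "subspace (tangent_space M p)" by (rule subspace_tangent_space[OF M])
  obtain L :: "'a \<Rightarrow>\<^sub>L 'a \<Rightarrow>\<^sub>L 'a" where L: "\<And>a w. sff M p a w = L a w"
    by (rule sff_bilinear_symmetric[OF M], rule that)
  show ?thesis
  proof
    show "weingarten M p u (a + b) = weingarten M p u a + weingarten M p u b" for a b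
      by (rule weingarten_unique[OF M])
        (auto simp: T subspace_add weingarten_in_tangent_space[OF M] inner_weingarten[OF M]
          inner_add_right L blinfun.add_left blinfun.add_right inner_add_left)
    show "weingarten M p u (c *\<^sub>R a) = c *\<^sub>R weingarten M p u a" for c a
      by (rule weingarten_unique[OF M])
        (auto simp: T subspace_scale weingarten_in_tangent_space[OF M] inner_weingarten[OF M] L
          blinfun.bilinear_simps)
  qed
qed

lemma weingarten_self_adjoint:
  fixes M :: "'a::euclidean_space set"
  assumes M: "C2_submanifold M" "p \<in> M"
    and "a \<in> tangent_space M p" "b \<in> tangent_space M p"
  shows "inner b (weingarten M p u a) = inner a (weingarten M p u b)"
proof -
  obtain L :: "'a \<Rightarrow>\<^sub>L 'a \<Rightarrow>\<^sub>L 'a" where "\<And>a w. sff M p a w = L a w" "\<And>a w. L a w = L w a"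
    by (rule sff_bilinear_symmetric[OF M], rule that)
  then show ?thesis using inner_weingarten[OF M] assms(3,4) by simp
qed

lemma weingarten_uminus:
  assumes M: "C2_submanifold M" "p \<in> M"
  shows "weingarten M p (- u) a = - weingarten M p u a"
  by (rule weingarten_unique[OF M])
    (auto simp: subspace_tangent_space[OF M] subspace_neg weingarten_in_tangent_space[OF M]
      inner_weingarten[OF M])

lemma weingarten_eigenbasis_exists:
  assumes M: "C2_submanifold M" "p \<in> M"
  obtains B where "orthonormal_eigenbasis (tangent_space M p) (weingarten M p u) B"
  using self_adjoint_eigenbasis_exists[OF subspace_tangent_space[OF M] linear_weingarten[OF M]
      weingarten_in_tangent_space[OF M] weingarten_self_adjoint[OF M]] by blast

section \<open>The derivative of the nearest-point map\<close>

lemma proj_graph_coordinates: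
  fixes M :: "'a::euclidean_space set"
  assumes M: "C2_submanifold M" "compact M" and nd: "normal_diffeo M \<tau>"
    and p: "p \<in> M" and v: "v \<in> normal_space M p" "norm v < \<tau>"
  obtains r g Dg D2g U V where "graph_chart M p (tangent_space M p) r g"
    "subspace (tangent_space M p)" "r > 0"
    "\<And>y. y \<in> ball 0 r \<Longrightarrow> (g has_derivative blinfun_apply (Dg y)) (at y)"
    "(Dg has_derivative blinfun_apply (D2g 0)) (at 0)" "Dg 0 = 0"
    "\<And>a w. sff M p a w = D2g 0 a w"
    "open U" "p + v \<in> U" "U \<subseteq> tube M \<tau>"
    "\<And>y. y \<in> U \<Longrightarrow> V y \<in> tangent_space M p \<inter> ball 0 r"
    "\<And>y. y \<in> U \<Longrightarrow> proj M y = p + V y + g (V y)"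
    "V (p + v) = 0"
    "\<And>D. (proj M has_derivative D) (at (p + v)) \<Longrightarrow>
       (V has_derivative (\<lambda>h. orth_proj (tangent_space M p) (D h))) (at (p + v))"
proof -
  let ?T = "tangent_space M p"
  obtain r g Dg D2g W where chart: "graph_chart M p ?T r g"
    and T: "subspace ?T" and "r > 0"
    and g_orth: "\<And>v. v \<in> ?T \<Longrightarrow> v \<in> ball 0 r \<Longrightarrow> g v \<in> orth_compl ?T"
    and dg: "\<And>y. y \<in> ball 0 r \<Longrightarrow> (g has_derivative blinfun_apply (Dg y)) (at y)"
    and d2g: "\<And>y. y \<in> ball 0 r \<Longrightarrow> (Dg has_derivative blinfun_apply (D2g y)) (at y)"
    and "Dg 0 = 0" "open W" "p \<in> W" and MW: "M \<inter> W = (\<lambda>v. p + v + g v) ` (?T \<inter> ball 0 r)"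
    and sff: "\<And>a w. sff M p a w = D2g 0 a w"
    by (rule tangent_chartE[OF M(1) p], rule that)
  define U where "U = proj M -` W \<inter> tube M \<tau>"
  define V where "V y = orth_proj ?T (proj M y - p)" for y
  have "open (tube M \<tau>)" using nd by (simp add: normal_diffeo_def)
  then have "open U"
    using continuous_on_open_vimage[THEN iffD1, OF _ continuous_on_proj_tube[OF M nd]] \<open>open W\<close>
    by (simp add: U_def)
  have "p + v \<in> U"
    using proj_tube_normal(1)[OF M nd p v] p v \<open>p \<in> W\<close> by (auto simp: U_def tube_def)
  have graph: "V y \<in> ?T \<inter> ball 0 r \<and> proj M y = p + V y + g (V y)" if "y \<in> U" for y
  proof -
    have "proj M y \<in> M \<inter> W" using proj_tube(1)[OF M nd] that by (auto simp: U_def)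
    then obtain v' where v': "v' \<in> ?T" "v' \<in> ball 0 r" "proj M y = p + v' + g v'" using MW by auto
    then have "V y = orth_proj ?T v' + orth_proj ?T (g v')"
      by (simp add: V_def linear_add[OF linear_orth_proj[OF T], symmetric] add.assoc)
    also have "\<dots> = v'"
      using orth_proj_id[OF T v'(1)] orth_proj_orth_compl[OF T g_orth[OF v'(1,2)]] by simp
    finally show ?thesis using v' by simp
  qed
  have "V (p + v) = 0"
    using proj_tube_normal(1)[OF M nd p v] linear_0[OF linear_orth_proj[OF T]] by (simp add: V_def)
  have dV: "(V has_derivative (\<lambda>h. orth_proj ?T (D h))) (at (p + v))"
    if "(proj M has_derivative D) (at (p + v))" for D
  proof -
    have "((\<lambda>y. proj M y - p) has_derivative D) (at (p + v))"
      using has_derivative_diff[OF that has_derivative_const[of p]] by simp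
    then show ?thesis
      unfolding V_def by (rule bounded_linear.has_derivative[OF bounded_linear_orth_proj[OF T]])
  qed
  have "U \<subseteq> tube M \<tau>" by (auto simp: U_def)
  have "(Dg has_derivative blinfun_apply (D2g 0)) (at 0)" using d2g \<open>r > 0\<close> by simp
  from that[OF chart T \<open>r > 0\<close> dg this \<open>Dg 0 = 0\<close> sff \<open>open U\<close> \<open>p + v \<in> U\<close> \<open>U \<subseteq> tube M \<tau>\<close>
      _ _ \<open>V (p + v) = 0\<close> dV]
  show ?thesis using graph by blast
qed

lemma proj_chart_orthogonal:
  fixes M :: "'a::euclidean_space set"
  assumes M: "C2_submanifold M" "compact M" and nd: "normal_diffeo M \<tau>" and "y \<in> tube M \<tau>"
    and chart: "graph_chart M p T r g" and "subspace T"
    and v0: "v0 \<in> T" "v0 \<in> ball 0 r" "proj M y = p + v0 + g v0"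
    and "(g has_derivative G') (at v0)" and "w \<in> T"
  shows "inner (y - proj M y) (w + G' w) = 0"
proof -
  have "\<And>q. q \<in> M \<Longrightarrow> dist y (p + v0 + g v0) \<le> dist y q"
    using proj_tube(2)[OF M nd \<open>y \<in> tube M \<tau>\<close>] v0(3) by simp
  from nearest_point_chart_orthogonal[OF \<open>subspace T\<close> graph_chart_in_manifold[OF chart] v0(1,2)
      \<open>(g has_derivative G') (at v0)\<close> this \<open>w \<in> T\<close>]
  show ?thesis using v0(3) by simp
qed

lemma proj_derivative_tangent:
  fixes M :: "'a::euclidean_space set"
  assumes M: "C2_submanifold M" "compact M" and nd: "normal_diffeo M \<tau>"
    and p: "p \<in> M" and v: "v \<in> normal_space M p" "norm v < \<tau>"
    and D: "(proj M has_derivative D) (at (p + v))"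
  shows "D h \<in> tangent_space M p"
proof -
  let ?T = "tangent_space M p"
  let ?x = "p + v"
  obtain r g Dg U V where T: "subspace ?T" and "r > 0"
    and dg: "\<And>y. y \<in> ball 0 r \<Longrightarrow> (g has_derivative blinfun_apply (Dg y)) (at y)"
    and "Dg 0 = 0" "open U" "?x \<in> U"
    and graph: "\<And>y. y \<in> U \<Longrightarrow> proj M y = p + V y + g (V y)"
    and "V ?x = 0"
    and dV: "\<And>D. (proj M has_derivative D) (at ?x) \<Longrightarrow> (V has_derivative (\<lambda>h. orth_proj ?T (D h))) (at ?x)"
    by (rule proj_graph_coordinates[OF M nd p v], rule that)
  have "(g has_derivative blinfun_apply (Dg (V ?x))) (at (V ?x))"
    using dg[of 0] \<open>r > 0\<close> \<open>V ?x = 0\<close> by simp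
  then have "((\<lambda>y. p + V y + g (V y)) has_derivative
      (\<lambda>h. 0 + orth_proj ?T (D h) + Dg (V ?x) (orth_proj ?T (D h)))) (at ?x)"
    by (intro has_derivative_add has_derivative_const dV[OF D] has_derivative_compose[OF dV[OF D]])
  then have "((\<lambda>y. p + V y + g (V y)) has_derivative (\<lambda>h. orth_proj ?T (D h))) (at ?x)"
    using \<open>V ?x = 0\<close> \<open>Dg 0 = 0\<close> by simp
  then have "(proj M has_derivative (\<lambda>h. orth_proj ?T (D h))) (at ?x)"
    by (rule has_derivative_transform_within_open[OF _ \<open>open U\<close> \<open>?x \<in> U\<close>]) (simp add: graph)
  then have "(\<lambda>h. orth_proj ?T (D h)) = D" using D by (rule has_derivative_unique)
  then show ?thesis by (metis orth_proj_in[OF T])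
qed

text \<open>Differentiating the first-order condition of the nearest-point problem along the tube.\<close>
lemma proj_derivative_sff:
  fixes M :: "'a::euclidean_space set"
  assumes M: "C2_submanifold M" "compact M" and nd: "normal_diffeo M \<tau>"
    and p: "p \<in> M" and v: "v \<in> normal_space M p" "norm v < \<tau>"
    and D: "(proj M has_derivative D) (at (p + v))"
    and w: "w \<in> tangent_space M p"
  shows "inner (h - D h) w + inner v (sff M p (D h) w) = 0"
proof -
  let ?T = "tangent_space M p"
  let ?x = "p + v"
  obtain r g Dg D2g U V where chart: "graph_chart M p ?T r g" and T: "subspace ?T"
    and dg: "\<And>y. y \<in> ball 0 r \<Longrightarrow> (g has_derivative blinfun_apply (Dg y)) (at y)"
    and d2g: "(Dg has_derivative blinfun_apply (D2g 0)) (at 0)" and "Dg 0 = 0"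
    and sff: "\<And>a w. sff M p a w = D2g 0 a w"
    and "open U" "?x \<in> U" "U \<subseteq> tube M \<tau>"
    and V: "\<And>y. y \<in> U \<Longrightarrow> V y \<in> ?T \<inter> ball 0 r"
    and graph: "\<And>y. y \<in> U \<Longrightarrow> proj M y = p + V y + g (V y)"
    and "V ?x = 0"
    and dV: "\<And>D. (proj M has_derivative D) (at ?x) \<Longrightarrow> (V has_derivative (\<lambda>h. orth_proj ?T (D h))) (at ?x)"
    by (rule proj_graph_coordinates[OF M nd p v], rule that)
  define \<Phi> where "\<Phi> y = inner (y - proj M y) (w + Dg (V y) w)" for y
  have "\<Phi> y = 0" if "y \<in> U" for y
    unfolding \<Phi>_def using V[OF that] \<open>U \<subseteq> tube M \<tau>\<close> that
    by (intro proj_chart_orthogonal[OF M nd _ chart T _ _ graph dg w]) auto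
  then have Z: "(\<Phi> has_derivative (\<lambda>k. 0)) (at ?x)"
    by (intro has_derivative_transform_within_open[OF has_derivative_const \<open>open U\<close> \<open>?x \<in> U\<close>]) auto
  have "(Dg has_derivative blinfun_apply (D2g 0)) (at (V ?x))" using d2g \<open>V ?x = 0\<close> by simp
  from has_derivative_compose[OF dV[OF D] this]
  have "((\<lambda>y. w + Dg (V y) w) has_derivative (\<lambda>k. 0 + D2g 0 (orth_proj ?T (D k)) w)) (at ?x)"
    by (intro has_derivative_add has_derivative_const
        bounded_linear.has_derivative[OF blinfun.bounded_linear_left])
  then have dP: "(\<Phi> has_derivative (\<lambda>k. inner (?x - proj M ?x) (0 + D2g 0 (orth_proj ?T (D k)) w)
      + inner (k - D k) (w + Dg (V ?x) w))) (at ?x)"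
    unfolding \<Phi>_def by (rule has_derivative_inner[OF has_derivative_diff[OF has_derivative_ident D]])
  have "inner (?x - proj M ?x) (0 + D2g 0 (orth_proj ?T (D h)) w)
      + inner (h - D h) (w + Dg (V ?x) w) = 0"
    using fun_cong[OF has_derivative_unique[OF dP Z], of h] by simp
  moreover have "orth_proj ?T (D h) = D h"
    using orth_proj_id[OF T proj_derivative_tangent[OF M nd p v D]] .
  ultimately show ?thesis
    using proj_tube_normal(1)[OF M nd p v] \<open>V ?x = 0\<close> \<open>Dg 0 = 0\<close> by (simp add: sff add.commute)
qed

section \<open>Curvature bounds from the reach\<close>

lemma scaleR_normal_space: "u \<in> normal_space M p \<Longrightarrow> c *\<^sub>R u \<in> normal_space M p"
  by (simp add: normal_space_def orth_compl_def)

lemma proj_differentiable_below_reach: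
  fixes M :: "'a::euclidean_space set"
  assumes M: "C2_submanifold M" "compact M" and "reach M > 0"
    and p: "p \<in> M" and v: "v \<in> normal_space M p" "norm v < reach M"
  obtains D \<tau> where "normal_diffeo M \<tau>" "norm v < \<tau>" "(proj M has_derivative D) (at (p + v))"
proof -
  obtain \<tau> where "\<tau> > norm v" "normal_diffeo M \<tau>" by (rule normal_diffeo_gt_exists[OF v(2)])
  moreover from this have "p + v \<in> tube M \<tau>" using p v by (auto simp: tube_def)
  ultimately show ?thesis using proj_differentiable_tube[OF M] that by metis
qed

text \<open>At distance \<open>1/l\<close> along \<open>u\<close> the linearised nearest-point equation reads
  \<open>(I - S\<^sub>u/l) (D e) = e\<close>; pairing it with the eigenvector \<open>e\<close> gives
  \<open>|e|\<^sup>2 = \<langle>D e, (I - S\<^sub>u/l) e\<rangle> = 0\<close>.\<close>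
lemma weingarten_eigenvalue_le_inv_reach:
  fixes M :: "'a::euclidean_space set"
  assumes M: "C2_submanifold M" "compact M" and "reach M > 0"
    and p: "p \<in> M" and u: "u \<in> normal_space M p" "norm u = 1"
    and e: "e \<in> tangent_space M p" "e \<noteq> 0" "weingarten M p u e = l *\<^sub>R e"
  shows "l \<le> 1 / reach M"
proof (rule ccontr)
  assume "\<not> l \<le> 1 / reach M"
  then have "l > 1 / reach M" by simp
  moreover have "1 / reach M > 0" using \<open>reach M > 0\<close> by simp
  ultimately have "l > 0" by linarith
  define s where "s = 1 / l"
  have "s < reach M" using \<open>1 / reach M < l\<close> \<open>l > 0\<close> \<open>reach M > 0\<close>
    by (simp add: s_def field_simps)
  moreover have "s > 0" using \<open>l > 0\<close> by (simp add: s_def)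
  ultimately have v: "s *\<^sub>R u \<in> normal_space M p" "norm (s *\<^sub>R u) < reach M"
    using scaleR_normal_space[OF u(1)] u(2) by auto
  obtain D \<tau> where nd: "normal_diffeo M \<tau>" "norm (s *\<^sub>R u) < \<tau>"
    and D: "(proj M has_derivative D) (at (p + s *\<^sub>R u))"
    by (rule proj_differentiable_below_reach[OF M \<open>reach M > 0\<close> p v])
  have De: "D e \<in> tangent_space M p" by (rule proj_derivative_tangent[OF M nd(1) p v(1) nd(2) D])
  have "inner (s *\<^sub>R u) (sff M p (D e) e) = s * inner (D e) (weingarten M p u e)"
    using inner_weingarten[OF M(1) p e(1), of u "D e"] weingarten_self_adjoint[OF M(1) p De e(1)]
    by (simp add: inner_commute)
  also have "\<dots> = inner (D e) e" using e(3) \<open>l > 0\<close> by (simp add: s_def)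
  finally have "inner (e - D e) e + inner (D e) e = 0"
    using proj_derivative_sff[OF M nd(1) p v(1) nd(2) D e(1), of e] by simp
  then show False using e(2) by (simp add: inner_diff_left)
qed

lemma finite_weingarten_eigs:
  assumes M: "C2_submanifold M" "p \<in> M"
  shows "finite (weingarten_eigs M p u)"
proof -
  obtain B where B: "orthonormal_eigenbasis (tangent_space M p) (weingarten M p u) B"
    by (rule weingarten_eigenbasis_exists[OF M])
  have "weingarten_eigs M p u \<subseteq> (\<lambda>b. inner b (weingarten M p u b)) ` B"
    using orthonormal_eigenbasis_eigenvalue[OF B weingarten_self_adjoint[OF M]]
    by (fastforce simp: weingarten_eigs_def)
  then show ?thesis using orthonormal_eigenbasis_finite[OF B] finite_surj by blast
qed

lemma abs_weingarten_eigenvalue_le_inv_reach: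
  fixes M :: "'a::euclidean_space set"
  assumes M: "C2_submanifold M" "compact M" and "reach M > 0"
    and p: "p \<in> M" and u: "u \<in> normal_space M p" "norm u = 1"
    and \<mu>: "\<mu> \<in> weingarten_eigs M p u"
  shows "\<bar>\<mu>\<bar> \<le> 1 / reach M"
proof -
  obtain a where a: "a \<in> tangent_space M p" "a \<noteq> 0" "weingarten M p u a = \<mu> *\<^sub>R a"
    using \<mu> by (auto simp: weingarten_eigs_def)
  have "\<mu> \<le> 1 / reach M"
    by (rule weingarten_eigenvalue_le_inv_reach[OF M \<open>reach M > 0\<close> p u a])
  moreover have "- \<mu> \<le> 1 / reach M"
    using weingarten_uminus[OF M(1) p] a u scaleR_normal_space[OF u(1), of "-1"]
    by (intro weingarten_eigenvalue_le_inv_reach[OF M \<open>reach M > 0\<close> p, of "- u" a]) auto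
  ultimately show ?thesis by linarith
qed

lemma kappa_at_le_inv_reach:
  fixes M :: "'a::euclidean_space set"
  assumes M: "C2_submanifold M" "compact M" and "reach M > 0"
    and p: "p \<in> M" and u: "u \<in> normal_space M p" "u \<noteq> 0"
  shows "kappa_at M p u \<le> 1 / reach M"
proof -
  have "u /\<^sub>R norm u \<in> normal_space M p" "norm (u /\<^sub>R norm u) = 1"
    using scaleR_normal_space[OF u(1)] u(2) by auto
  then show ?thesis
    using abs_weingarten_eigenvalue_le_inv_reach[OF M \<open>reach M > 0\<close> p] \<open>reach M > 0\<close>
      finite_weingarten_eigs[OF M(1) p]
    unfolding kappa_at_def by (subst Max_le_iff) auto
qed

lemma
  assumes "C2_submanifold M" "p \<in> M"
  shows inv_rho_nonneg: "0 \<le> inv_rho M p u"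
    and kappa_at_nonneg: "0 \<le> kappa_at M p u"
    and inv_rho_le_kappa_at: "inv_rho M p u \<le> kappa_at M p u"
proof -
  let ?E = "weingarten_eigs M p (u /\<^sub>R norm u)"
  have fin: "finite ?E" by (rule finite_weingarten_eigs[OF assms])
  then show "0 \<le> inv_rho M p u" "0 \<le> kappa_at M p u"
    unfolding inv_rho_def kappa_at_def by (auto intro: Max_ge)
  have "l \<le> kappa_at M p u" if "l \<in> ?E \<union> {0}" for l
  proof -
    have "\<bar>l\<bar> \<le> kappa_at M p u"
      unfolding kappa_at_def using that fin by (intro Max_ge) auto
    then show ?thesis by linarith
  qed
  then show "inv_rho M p u \<le> kappa_at M p u"
    unfolding inv_rho_def using fin by (subst Max_le_iff) auto
qed

text \<open>The point \<open>p\<close> and the normal \<open>u\<close> only witness that the set under the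
  \<open>Sup\<close> defining \<open>kappa M\<close> is nonempty.\<close>
lemma
  fixes M :: "'a::euclidean_space set"
  assumes M: "C2_submanifold M" "compact M" and "reach M > 0"
    and p: "p \<in> M" and u: "u \<in> normal_space M p" "u \<noteq> 0"
  shows kappa_at_le_kappa: "kappa_at M p u \<le> kappa M"
    and kappa_le_inv_reach: "kappa M \<le> 1 / reach M"
proof -
  define K where "K = {kappa_at M p u | p u. p \<in> M \<and> u \<in> normal_space M p \<and> u \<noteq> 0}"
  have bound: "k \<le> 1 / reach M" if "k \<in> K" for k
    using that kappa_at_le_inv_reach[OF M \<open>reach M > 0\<close>] by (auto simp: K_def)
  have "kappa_at M p u \<in> K" using p u by (auto simp: K_def)
  moreover have "bdd_above K" using bound by (rule bdd_aboveI)
  ultimately show "kappa_at M p u \<le> kappa M" "kappa M \<le> 1 / reach M"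
    unfolding kappa_def K_def[symmetric] using bound by (auto intro: cSup_upper cSup_least)
qed

section \<open>The tangent projection along a normal segment\<close>

lemma P0_on_manifold:
  fixes M :: "'a::euclidean_space set"
  assumes M: "C2_submanifold M" "compact M" and "reach M > 0" and p: "p \<in> M"
  shows "blinfun_apply (P0 M p) = orth_proj (tangent_space M p)"
proof
  fix h
  have v: "0 \<in> normal_space M p" "norm 0 < reach M"
    using \<open>reach M > 0\<close> by (auto simp: normal_space_def orth_compl_def)
  obtain D \<tau> where nd: "normal_diffeo M \<tau>" "norm (0::'a) < \<tau>"
    and D: "(proj M has_derivative D) (at (p + 0))"
    by (rule proj_differentiable_below_reach[OF M \<open>reach M > 0\<close> p v])
  have "orth_proj (tangent_space M p) h = D h"
    using proj_derivative_tangent[OF M nd(1) p v(1) nd(2) D] proj_derivative_sff[OF M nd(1) p v(1) nd(2) D]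
    by (intro orth_proj_unique[OF subspace_tangent_space[OF M(1) p]]) auto
  then show "P0 M p h = orth_proj (tangent_space M p) h" using P0_eq_derivative[OF D] by simp
qed

lemma P0_tube_resolvent:
  fixes M :: "'a::euclidean_space set"
  assumes M: "C2_submanifold M" "compact M" and "reach M > 0"
    and p: "p \<in> M" and v: "v \<in> normal_space M p" "norm v < reach M"
  defines "S \<equiv> weingarten M p (v /\<^sub>R norm v)"
  shows "P0 M (p + v) h \<in> tangent_space M p"
    and "orth_proj (tangent_space M p) h = P0 M (p + v) h - norm v *\<^sub>R S (P0 M (p + v) h)"
proof -
  let ?T = "tangent_space M p"
  obtain D \<tau> where nd: "normal_diffeo M \<tau>" "norm v < \<tau>"
    and D: "(proj M has_derivative D) (at (p + v))"
    by (rule proj_differentiable_below_reach[OF M \<open>reach M > 0\<close> p v])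
  have P0: "P0 M (p + v) h = D h" using P0_eq_derivative[OF D] by simp
  show Dh: "P0 M (p + v) h \<in> ?T"
    unfolding P0 by (rule proj_derivative_tangent[OF M nd(1) p v(1) nd(2) D])
  have "inner v (sff M p (D h) w) = norm v * inner w (S (D h))" if "w \<in> ?T" for w
    using inner_weingarten[OF M(1) p that, of "v /\<^sub>R norm v" "D h"]
    by (cases "v = 0") (simp_all add: S_def inner_commute)
  then have "inner (h - (D h - norm v *\<^sub>R S (D h))) w = 0" if "w \<in> ?T" for w
    using proj_derivative_sff[OF M nd(1) p v(1) nd(2) D that, of h] that
    by (simp add: inner_diff_left inner_commute[of w] algebra_simps)
  moreover have "D h - norm v *\<^sub>R S (D h) \<in> ?T"
    using Dh subspace_tangent_space[OF M(1) p] weingarten_in_tangent_space[OF M(1) p]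
    by (simp add: P0 S_def subspace_diff subspace_scale)
  ultimately show "orth_proj ?T h = P0 M (p + v) h - norm v *\<^sub>R S (P0 M (p + v) h)"
    using orth_proj_unique[OF subspace_tangent_space[OF M(1) p]] by (simp add: P0)
qed

lemma scalar_resolvent_bound:
  fixes l k \<rho> t :: real
  assumes "\<bar>l\<bar> \<le> k" "l \<le> \<rho>" "0 < t" "t * \<rho> < 1"
  shows "\<bar>t * l\<bar> \<le> k * inverse (1 - t * \<rho>) * t * \<bar>1 - t * l\<bar>"
proof -
  have "\<bar>t * l\<bar> \<le> t * k" using assms by (simp add: abs_mult mult_left_mono)
  also have "\<dots> = k * inverse (1 - t * \<rho>) * t * (1 - t * \<rho>)" using assms(4) by simp
  also have "\<dots> \<le> k * inverse (1 - t * \<rho>) * t * \<bar>1 - t * l\<bar>"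
  proof (rule mult_left_mono)
    have "t * l \<le> t * \<rho>" using assms by (simp add: mult_left_mono)
    then show "1 - t * \<rho> \<le> \<bar>1 - t * l\<bar>" by linarith
    show "0 \<le> k * inverse (1 - t * \<rho>) * t" using assms by simp
  qed
  finally show ?thesis .
qed

lemma norm_mult_inv_rho_less_1:
  fixes M :: "'a::euclidean_space set"
  assumes M: "C2_submanifold M" "compact M" and "reach M > 0"
    and p: "p \<in> M" and v: "v \<in> normal_space M p" "v \<noteq> 0" "norm v < reach M"
  shows "norm v * inv_rho M p v < 1"
proof -
  have "inv_rho M p v \<le> 1 / reach M"
    using inv_rho_le_kappa_at[OF M(1) p] kappa_at_le_inv_reach[OF M \<open>reach M > 0\<close> p v(1,2)]
    by (rule order_trans)
  then have "norm v * inv_rho M p v \<le> norm v * (1 / reach M)" by (intro mult_left_mono) auto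
  also have "\<dots> < 1" using v(3) \<open>reach M > 0\<close> by simp
  finally show ?thesis .
qed

lemma norm_P0_diff_le:
  fixes M :: "'a::euclidean_space set"
  assumes M: "C2_submanifold M" "compact M" and "reach M > 0"
    and p: "p \<in> M" and v: "v \<in> normal_space M p" "v \<noteq> 0" "norm v < reach M"
  shows "norm (P0 M p - P0 M (p + v)) \<le> kappa_at M p v * inverse (1 - norm v * inv_rho M p v) * norm v"
    (is "_ \<le> ?C")
proof -
  let ?T = "tangent_space M p" and ?S = "weingarten M p (v /\<^sub>R norm v)"
  have "?C \<ge> 0"
    using norm_mult_inv_rho_less_1[OF M \<open>reach M > 0\<close> p v] kappa_at_nonneg[OF M(1) p] by simp
  obtain B where B: "orthonormal_eigenbasis ?T ?S B" by (rule weingarten_eigenbasis_exists[OF M(1) p])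
  have bound: "\<bar>norm v * inner b (?S b)\<bar> \<le> ?C * \<bar>1 - norm v * inner b (?S b)\<bar>" if "b \<in> B" for b
  proof -
    have "b \<in> ?T" "b \<noteq> 0"
      using that orthonormal_eigenbasis_subset[OF B] orthonormal_eigenbasis_norm[OF B that] by auto
    then have "inner b (?S b) \<in> weingarten_eigs M p (v /\<^sub>R norm v)"
      unfolding weingarten_eigs_def using orthonormal_eigenbasis_eigenvector[OF B that] by blast
    then show ?thesis
      using finite_weingarten_eigs[OF M(1) p] norm_mult_inv_rho_less_1[OF M \<open>reach M > 0\<close> p v] v(2)
      by (intro scalar_resolvent_bound) (auto simp: kappa_at_def inv_rho_def)
  qed
  have resolvent: "norm (norm v *\<^sub>R ?S a) \<le> ?C * norm (a - norm v *\<^sub>R ?S a)" if "a \<in> ?T" for a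
    by (rule orthonormal_eigenbasis_resolvent_bound[OF B linear_weingarten[OF M(1) p] that \<open>?C \<ge> 0\<close> bound])
  show ?thesis
  proof (rule norm_blinfun_bound[OF \<open>?C \<ge> 0\<close>])
    fix h
    let ?Dh = "P0 M (p + v) h"
    have "norm ((P0 M p - P0 M (p + v)) h) = norm (norm v *\<^sub>R ?S ?Dh)"
      using P0_tube_resolvent(2)[OF M \<open>reach M > 0\<close> p v(1,3), of h]
      by (simp add: blinfun.diff_left P0_on_manifold[OF M \<open>reach M > 0\<close> p])
    also have "\<dots> \<le> ?C * norm (orth_proj ?T h)"
      using resolvent[OF P0_tube_resolvent(1)[OF M \<open>reach M > 0\<close> p v(1,3)]]
        P0_tube_resolvent(2)[OF M \<open>reach M > 0\<close> p v(1,3), of h] by simp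
    also have "\<dots> \<le> ?C * norm h"
      using norm_orth_proj_le[OF subspace_tangent_space[OF M(1) p]] \<open>?C \<ge> 0\<close> by (rule mult_left_mono)
    finally show "norm ((P0 M p - P0 M (p + v)) h) \<le> ?C * norm h" .
  qed
qed

lemma curvature_bound_mono:
  fixes t \<rho> k \<kappa> R :: real
  assumes "0 \<le> \<rho>" "\<rho> \<le> k" "k \<le> \<kappa>" "\<kappa> \<le> 1 / R" "0 < t" "t < R"
  shows "k * inverse (1 - t * \<rho>) * t \<le> t * \<kappa> / (1 - t * \<kappa>)"
    and "t * \<kappa> / (1 - t * \<kappa>) \<le> (t / R) / (1 - t / R)"
proof -
  have "R > 0" using assms by linarith
  have "t * \<kappa> \<le> t / R" using assms by (simp add: mult_left_mono divide_inverse)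
  moreover have "t / R < 1" using assms \<open>R > 0\<close> by simp
  ultimately have "1 - t * \<kappa> > 0" by linarith
  moreover have "t * \<rho> \<le> t * \<kappa>" using assms by (simp add: mult_left_mono)
  ultimately have "1 - t * \<rho> > 0" "inverse (1 - t * \<rho>) \<le> inverse (1 - t * \<kappa>)"
    by (auto intro: le_imp_inverse_le)
  then have "k * inverse (1 - t * \<rho>) * t \<le> \<kappa> * inverse (1 - t * \<kappa>) * t"
    using assms by (intro mult_right_mono mult_mono) auto
  then show "k * inverse (1 - t * \<rho>) * t \<le> t * \<kappa> / (1 - t * \<kappa>)"
    by (simp add: divide_inverse ac_simps)
  show "t * \<kappa> / (1 - t * \<kappa>) \<le> (t / R) / (1 - t / R)"
    using \<open>t * \<kappa> \<le> t / R\<close> \<open>t / R < 1\<close> assms \<open>R > 0\<close> by (intro frac_le) auto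
qed

theorem lemma3:
  fixes M :: "'a::euclidean_space set" and x :: 'a
  assumes "C2_submanifold M" and "compact M" and "reach M > 0"
    and "x \<in> tube M (reach M)"
  shows "norm (P0 M (proj M x) - P0 M x)
           \<le> kappa_at M (proj M x) (x - proj M x)
              * inverse (1 - norm (proj M x - x) * inv_rho M (proj M x) (x - proj M x))
              * norm (x - proj M x)
      \<and> kappa_at M (proj M x) (x - proj M x)
              * inverse (1 - norm (proj M x - x) * inv_rho M (proj M x) (x - proj M x))
              * norm (x - proj M x)
           \<le> norm (x - proj M x) * kappa M / (1 - norm (x - proj M x) * kappa M)
      \<and> norm (x - proj M x) * kappa M / (1 - norm (x - proj M x) * kappa M)
           \<le> (norm (x - proj M x) / reach M) / (1 - norm (x - proj M x) / reach M)"
proof -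
  note M = assms(1,2) and R = \<open>reach M > 0\<close>
  obtain p v where x: "x = p + v" and p: "p \<in> M" and v: "v \<in> normal_space M p" "norm v < reach M"
    using assms(4) by (auto simp: tube_def)
  obtain \<tau> where "\<tau> > norm v" "normal_diffeo M \<tau>" by (rule normal_diffeo_gt_exists[OF v(2)])
  then have "proj M x = p" using proj_tube_normal(1)[OF M _ p v(1)] x by blast
  have px: "x - p = v" "norm (p - x) = norm v" by (auto simp: x norm_minus_commute)
  show ?thesis
  proof (cases "v = 0")
    case True
    then show ?thesis using \<open>proj M x = p\<close> by (simp add: x)
  next
    case False
    then show ?thesis
      unfolding \<open>proj M x = p\<close> px
      using norm_P0_diff_le[OF M R p v(1) False v(2), folded x]
        curvature_bound_mono[OF inv_rho_nonneg[OF M(1) p] inv_rho_le_kappa_at[OF M(1) p]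
          kappa_at_le_kappa[OF M R p v(1) False] kappa_le_inv_reach[OF M R p v(1) False]
          _ v(2)] by auto
  qed
qed

end
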